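(* Assume $0<q_{00}<1$, $\theta_1>0$, that $p_{00}$ and $p_{10}$ have finite moment generating functions in a neighbourhood of $0$, and that $M$ is diagonalizable. Let $\mu_t=\mathbb E[Y_t]$ and, for integers $k\ge1$, $\mu^0_k=\frac{\theta_1}{q_{00}}(M^k)_{00}$ (the expectation of $Y_k$ when $\nu=e_0$). Then the covariance matrix $\Sigma_{tt'}=\mathrm{Cov}(Y_t,Y_{t'})$ satisfies, for $t=1,\dots,T$, $$\Sigma_{tt}=\big(\theta_1(\theta_3+1)+1-\mu_t\big)\mu_t,$$ and for $1\le t'<t\le T$, $$\Sigma_{tt'}=\left[\Big(\theta_2-q_{00}\frac{1-\theta_2}{1-q_{00}}\Big)\mu^0_{t-t'}+\frac{1-\theta_2}{1-q_{00}}\mu^0_{t-t'+1}-\mu_t\right]\mu_{t'}.$$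
   Context: Hidden two-timescale Markov model (HTMM). Fix integers $r\ge 1$, $T\ge 1$ and $\mathcal S=\{0,1,\dots,r\}$. Let $q_{xz}\in[0,1]$ for $x\in\mathcal S$, $z\in\{0,\dots,r-1\}$, with $\sum_{x}q_{xz}=1$ for each such $z$. Define column-stochastic matrices $M^{\ell}$, $M^{s}$ indexed by $\mathcal S$: column $0$ of $M^\ell$ is $e_0$, column $r$ of $M^\ell$ is $e_r$, $M^\ell_{xz}=q_{xz}$ for $1\le z\le r-1$; column $0$ of $M^s$ is $(q_{00},\dots,q_{r0})^{\mathrm T}$ and $M^s_{xz}=\delta_{xz}$ for $z\ge 1$. Set $M=M^sM^\ell$. Let $p_{00},p_{10}$ be probability distributions on $\mathbb N_0$; put $p_{x0}:=p_{10}$ for $x\ge1$ and $p_{xx'}:=\delta_0$ for $x'\ne0$. Let $\nu$ be a probability vector on $\mathcal S$. The HTMM is the random vector $(X_0,X'_1,X_1,Y_1,\dots,X'_T,X_T,Y_T)$ with joint law $\mathbb P(X_0=x_0,X'_t=x'_t,X_t=x_t,Y_t=y_t,1\le t\le T)=\nu_{x_0}\prod_{t=1}^T M^\ell_{x'_tx_{t-1}}M^s_{x_tx'_t}p_{x_tx'_t}(y_t)$. Inner-model parameters (independent of $t$): $\theta_1=\mathbb E[Y_t\mid X'_t=0]$, $\theta_2=q_{00}\,\mathbb E[Y_t\mid X'_t=X_t=0]/\theta_1$, $\theta_3=\mathrm{Var}[Y_t\mid X'_t=0]/\theta_1^2-1/\theta_1$. *)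

theory Defs
  imports "HOL-Probability.Probability" "Jordan_Normal_Form.Matrix"
begin

text \<open>State space S = {0..r}. Matrices indexed by S are functions nat => nat => real,
  vanishing outside S x S. Entry (x,z) = transition probability from z to x
  (column-stochastic convention).\<close>

definition Ml :: "(nat \<Rightarrow> nat \<Rightarrow> real) \<Rightarrow> nat \<Rightarrow> nat \<Rightarrow> nat \<Rightarrow> real" where
  "Ml q r x z = (if r < x \<or> r < z then 0
     else if z = 0 then (if x = 0 then 1 else 0)
     else if z = r then (if x = r then 1 else 0)
     else q x z)"

definition Ms :: "(nat \<Rightarrow> nat \<Rightarrow> real) \<Rightarrow> nat \<Rightarrow> nat \<Rightarrow> nat \<Rightarrow> real" where
  "Ms q r x z = (if r < x \<or> r < z then 0
     else if z = 0 then q x 0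
     else (if x = z then 1 else 0))"

definition Mmat :: "(nat \<Rightarrow> nat \<Rightarrow> real) \<Rightarrow> nat \<Rightarrow> real mat" where
  "Mmat q r = mat (Suc r) (Suc r) (\<lambda>(x,z). \<Sum>k\<le>r. Ms q r x k * Ml q r k z)"

definition pY :: "nat pmf \<Rightarrow> nat pmf \<Rightarrow> nat \<Rightarrow> nat \<Rightarrow> nat \<Rightarrow> real" where
  "pY p00 p10 x x' y = (if x' \<noteq> 0 then (if y = 0 then 1 else 0)
      else if x = 0 then pmf p00 y else pmf p10 y)"

text \<open>Outcomes: (x_0, [(x'_1,x_1,y_1), ..., (x'_T,x_T,y_T)]).\<close>
type_synonym outcome = "nat \<times> (nat \<times> nat \<times> nat) list"

fun path_weight :: "(nat \<Rightarrow> nat \<Rightarrow> real) \<Rightarrow> nat \<Rightarrow> nat pmf \<Rightarrow> nat pmf \<Rightarrow> nat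
     \<Rightarrow> (nat \<times> nat \<times> nat) list \<Rightarrow> real" where
  "path_weight q r p00 p10 xprev [] = 1"
| "path_weight q r p00 p10 xprev ((x', x, y) # L) =
     Ml q r x' xprev * Ms q r x x' * pY p00 p10 x x' y * path_weight q r p00 p10 x L"

definition htmm_density :: "(nat \<Rightarrow> real) \<Rightarrow> (nat \<Rightarrow> nat \<Rightarrow> real) \<Rightarrow> nat \<Rightarrow> nat \<Rightarrow> nat pmf \<Rightarrow> nat pmf
     \<Rightarrow> outcome \<Rightarrow> real" where
  "htmm_density \<nu> q r T p00 p10 \<omega> =
     (if length (snd \<omega>) = T then \<nu> (fst \<omega>) * path_weight q r p00 p10 (fst \<omega>) (snd \<omega>) else 0)"

definition htmm :: "(nat \<Rightarrow> real) \<Rightarrow> (nat \<Rightarrow> nat \<Rightarrow> real) \<Rightarrow> nat \<Rightarrow> nat \<Rightarrow> nat pmf \<Rightarrow> nat pmf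
     \<Rightarrow> outcome pmf" where
  "htmm \<nu> q r T p00 p10 = embed_pmf (htmm_density \<nu> q r T p00 p10)"

definition Yobs :: "nat \<Rightarrow> outcome \<Rightarrow> real" where
  "Yobs t \<omega> = real (snd (snd (snd \<omega> ! (t - 1))))"

definition cov :: "'a pmf \<Rightarrow> ('a \<Rightarrow> real) \<Rightarrow> ('a \<Rightarrow> real) \<Rightarrow> real" where
  "cov P X Z = measure_pmf.expectation P
      (\<lambda>w. (X w - measure_pmf.expectation P X) * (Z w - measure_pmf.expectation P Z))"

text \<open>Inner-model quantities: conditional on X'_t = 0, X_t ~ q_{.0} and Y_t ~ p_{X_t 0}.\<close>
definition pin :: "nat pmf \<Rightarrow> nat pmf \<Rightarrow> nat \<Rightarrow> nat pmf" where
  "pin p00 p10 x = (if x = 0 then p00 else p10)"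

definition pmean :: "nat pmf \<Rightarrow> real" where
  "pmean p = measure_pmf.expectation p real"

definition psecond :: "nat pmf \<Rightarrow> real" where
  "psecond p = measure_pmf.expectation p (\<lambda>y. (real y)^2)"

definition theta1 :: "(nat \<Rightarrow> nat \<Rightarrow> real) \<Rightarrow> nat \<Rightarrow> nat pmf \<Rightarrow> nat pmf \<Rightarrow> real" where
  "theta1 q r p00 p10 = (\<Sum>x\<le>r. q x 0 * pmean (pin p00 p10 x))"

definition theta2 :: "(nat \<Rightarrow> nat \<Rightarrow> real) \<Rightarrow> nat \<Rightarrow> nat pmf \<Rightarrow> nat pmf \<Rightarrow> real" where
  "theta2 q r p00 p10 = q 0 0 * pmean p00 / theta1 q r p00 p10"

definition inner_var :: "(nat \<Rightarrow> nat \<Rightarrow> real) \<Rightarrow> nat \<Rightarrow> nat pmf \<Rightarrow> nat pmf \<Rightarrow> real" where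
  "inner_var q r p00 p10 = (\<Sum>x\<le>r. q x 0 * psecond (pin p00 p10 x)) - (theta1 q r p00 p10)^2"

definition theta3 :: "(nat \<Rightarrow> nat \<Rightarrow> real) \<Rightarrow> nat \<Rightarrow> nat pmf \<Rightarrow> nat pmf \<Rightarrow> real" where
  "theta3 q r p00 p10 = inner_var q r p00 p10 / (theta1 q r p00 p10)^2 - 1 / theta1 q r p00 p10"

definition mu0 :: "(nat \<Rightarrow> nat \<Rightarrow> real) \<Rightarrow> nat \<Rightarrow> nat pmf \<Rightarrow> nat pmf \<Rightarrow> nat \<Rightarrow> real" where
  "mu0 q r p00 p10 k = theta1 q r p00 p10 / q 0 0 * (Mmat q r ^\<^sub>m k) $$ (0, 0)"

definition mgf_finite_near_0 :: "nat pmf \<Rightarrow> bool" where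
  "mgf_finite_near_0 p = (\<exists>\<epsilon>>0. \<forall>s. \<bar>s\<bar> < \<epsilon> \<longrightarrow> integrable (measure_pmf p) (\<lambda>y. exp (s * real y)))"

definition diagonalizable :: "real mat \<Rightarrow> bool" where
  "diagonalizable A = (\<exists>D. diagonal_mat D \<and> similar_mat (map_mat complex_of_real A) D)"

end

theory Submission
  imports Defs
begin

(* The HTMM is a Markov chain in the hidden state X_t whose steps emit the triples (X'_t, X_t, Y_t), and
   its state kernel is the matrix M. Every state X'_t other than 0 emits Y_t = 0, while given X'_t = 0 the
   pair (X_t, Y_t) follows the inner model independently of the past. By the Markov property,
   E[Y_t^2] = P(X'_t = 0) E[Y^2 | X' = 0] and, for t' < t,
     E[Y_t' Y_t] = P(X'_t' = 0) theta1 sum_z q_z0 E[Y | X = z, X' = 0] P(X'_t = 0 | X_t' = z).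
   Splitting off z = 0 and using that the chain moves from 0 to z with probability q_z0, the sum becomes a
   combination of P(X'_k = 0 | X_0 = 0) = (M^k)_00 / q_00 for k = t - t' and k = t - t' + 1, that is of
   mu0 (t - t') and mu0 (t - t' + 1). *)

lemma pmf_bind_map_inj:
  assumes inj: "\<And>a b a' b'. f a b = f a' b' \<Longrightarrow> a = a' \<and> b = b'"
  shows "pmf (A \<bind> (\<lambda>a. map_pmf (f a) (B a))) (f a b) = pmf A a * pmf (B a) b"
proof -
  have "pmf (map_pmf (f a') (B a')) (f a b) = indicator {a} a' * pmf (B a) b" for a'
  proof (cases "a' = a")
    case True
    have "inj (f a)" using inj by (auto intro: injI)
    with True show ?thesis by (simp add: pmf_map_inj')
  next
    case False
    then show ?thesis using inj by (auto intro!: pmf_map_outside)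
  qed
  then show ?thesis by (simp add: pmf_bind measure_pmf_single)
qed

lemma pmf_bind_map_Pair:
  "pmf (A \<bind> (\<lambda>a. map_pmf (Pair a) (B a))) (a, b) = pmf A a * pmf (B a) b"
  by (rule pmf_bind_map_inj) simp

primrec path_pmf :: "('s \<Rightarrow> 'e pmf) \<Rightarrow> ('e \<Rightarrow> 's) \<Rightarrow> nat \<Rightarrow> 's \<Rightarrow> 'e list pmf" where
  "path_pmf K state 0 x = return_pmf []"
| "path_pmf K state (Suc n) x = K x \<bind> (\<lambda>e. map_pmf ((#) e) (path_pmf K state n (state e)))"

primrec kernel_pow :: "('s \<Rightarrow> 's pmf) \<Rightarrow> nat \<Rightarrow> 's \<Rightarrow> 's pmf" where
  "kernel_pow P 0 x = return_pmf x"
| "kernel_pow P (Suc n) x = P x \<bind> kernel_pow P n"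

lemma kernel_pow_Suc_right: "kernel_pow P (Suc n) x = kernel_pow P n x \<bind> P"
proof (induction n arbitrary: x)
  case 0
  have "P x \<bind> kernel_pow P 0 = P x \<bind> return_pmf"
    by (intro bind_pmf_cong) auto
  then show ?case by (simp add: bind_return_pmf bind_return_pmf')
next
  case (Suc n)
  have "kernel_pow P (Suc (Suc n)) x = P x \<bind> kernel_pow P (Suc n)"
    by (rule kernel_pow.simps(2))
  also have "\<dots> = P x \<bind> (\<lambda>y. kernel_pow P n y \<bind> P)"
    by (simp only: ext[OF Suc.IH])
  also have "\<dots> = kernel_pow P (Suc n) x \<bind> P"
    by (simp add: bind_assoc_pmf)
  finally show ?case .
qed

lemma length_path_pmf: "L \<in> set_pmf (path_pmf K state n x) \<Longrightarrow> length L = n"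
  by (induction n arbitrary: x L) auto

lemma pmf_path_pmf_Cons:
  "pmf (path_pmf K state (Suc n) x) (e # L) = pmf (K x) e * pmf (path_pmf K state n (state e)) L"
  unfolding path_pmf.simps by (rule pmf_bind_map_inj) simp

lemma nn_integral_path_pmf_drop:
  assumes "i \<le> n"
  shows "(\<integral>\<^sup>+L. F (drop i L) \<partial>path_pmf K state n x) =
    (\<integral>\<^sup>+y. (\<integral>\<^sup>+L. F L \<partial>path_pmf K state (n - i) y) \<partial>kernel_pow (\<lambda>x. map_pmf state (K x)) i x)"
  using assms
proof (induction i arbitrary: n x)
  case (Suc i)
  then obtain m where "n = Suc m" "i \<le> m" by (cases n) auto
  then show ?case using Suc.IH by simp
qed simp

definition stochastic_vector :: "nat \<Rightarrow> (nat \<Rightarrow> real) \<Rightarrow> bool" where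
  "stochastic_vector r v \<longleftrightarrow> (\<forall>x. 0 \<le> v x) \<and> (\<forall>x>r. v x = 0) \<and> (\<Sum>x\<le>r. v x) = 1"

lemma pmf_embed_stochastic_vector:
  assumes "stochastic_vector r v"
  shows "pmf (embed_pmf v) x = v x"
proof (rule pmf_embed_pmf)
  show "0 \<le> v x" for x using assms by (simp add: stochastic_vector_def)
  have "(\<integral>\<^sup>+x. ennreal (v x) \<partial>count_space UNIV) = (\<Sum>x\<le>r. ennreal (v x))"
    using assms by (intro nn_integral_count_space') (auto simp: stochastic_vector_def)
  then show "(\<integral>\<^sup>+x. ennreal (v x) \<partial>count_space UNIV) = 1"
    using assms by (simp add: stochastic_vector_def)
qed

lemma set_pmf_embed_stochastic_vector:
  "stochastic_vector r v \<Longrightarrow> set_pmf (embed_pmf v) \<subseteq> {..r}"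
  by (auto simp: set_pmf_iff pmf_embed_stochastic_vector stochastic_vector_def not_le[symmetric])

lemma nn_integral_embed_stochastic_vector:
  assumes "stochastic_vector r v"
  shows "(\<integral>\<^sup>+x. f x \<partial>embed_pmf v) = (\<Sum>x\<le>r. ennreal (v x) * f x)"
  using set_pmf_embed_stochastic_vector[OF assms]
  by (subst nn_integral_measure_pmf_support[of "{..r}"])
     (auto simp: pmf_embed_stochastic_vector[OF assms] mult.commute)

lemma integral_embed_stochastic_vector:
  assumes "stochastic_vector r v"
  shows "(\<integral>x. f x \<partial>embed_pmf v) = (\<Sum>x\<le>r. v x * f x)"
  using set_pmf_embed_stochastic_vector[OF assms]
  by (subst integral_measure_pmf_real[of "{..r}"])
     (auto simp: pmf_embed_stochastic_vector[OF assms] mult.commute)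

(* Junk unless column z of A is a stochastic vector. *)
definition column_pmf :: "(nat \<Rightarrow> nat \<Rightarrow> real) \<Rightarrow> nat \<Rightarrow> nat pmf" where
  "column_pmf A z = embed_pmf (\<lambda>x. A x z)"

locale htmm_model =
  fixes r :: nat and q :: "nat \<Rightarrow> nat \<Rightarrow> real" and p00 p10 :: "nat pmf"
  assumes r_pos: "1 \<le> r"
    and q_range: "\<forall>x\<le>r. \<forall>z<r. 0 \<le> q x z \<and> q x z \<le> 1"
    and q_stoch: "\<forall>z<r. (\<Sum>x\<le>r. q x z) = 1"
begin

lemma stochastic_Ml:
  assumes "z \<le> r"
  shows "stochastic_vector r (\<lambda>x. Ml q r x z)"
  unfolding stochastic_vector_def
proof (intro conjI allI impI)
  show "0 \<le> Ml q r x z" for x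
    using q_range by (simp add: Ml_def)
  show "Ml q r x z = 0" if "r < x" for x
    using that by (simp add: Ml_def)
  show "(\<Sum>x\<le>r. Ml q r x z) = 1"
  proof (cases "z = 0 \<or> z = r")
    case True
    then have "(\<Sum>x\<le>r. Ml q r x z) = (\<Sum>x\<le>r. if x = z then 1 else 0)"
      using r_pos assms by (intro sum.cong) (auto simp: Ml_def)
    then show ?thesis using assms by simp
  next
    case False
    then have "(\<Sum>x\<le>r. Ml q r x z) = (\<Sum>x\<le>r. q x z)"
      using assms by (intro sum.cong) (auto simp: Ml_def)
    then show ?thesis using q_stoch assms False by simp
  qed
qed

lemma stochastic_Ms:
  assumes "z \<le> r"
  shows "stochastic_vector r (\<lambda>x. Ms q r x z)"
  unfolding stochastic_vector_def
proof (intro conjI allI impI)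
  show "0 \<le> Ms q r x z" for x
    using q_range r_pos by (simp add: Ms_def)
  show "Ms q r x z = 0" if "r < x" for x
    using that by (simp add: Ms_def)
  show "(\<Sum>x\<le>r. Ms q r x z) = 1"
  proof (cases "z = 0")
    case True
    then have "(\<Sum>x\<le>r. Ms q r x z) = (\<Sum>x\<le>r. q x 0)"
      using assms by (intro sum.cong) (auto simp: Ms_def)
    then show ?thesis using q_stoch r_pos True by simp
  next
    case False
    then have "(\<Sum>x\<le>r. Ms q r x z) = (\<Sum>x\<le>r. if x = z then 1 else 0)"
      using assms by (intro sum.cong) (auto simp: Ms_def)
    then show ?thesis using assms by simp
  qed
qed

lemma pmf_column_Ml: "z \<le> r \<Longrightarrow> pmf (column_pmf (Ml q r) z) x = Ml q r x z"
  using pmf_embed_stochastic_vector[OF stochastic_Ml] by (simp add: column_pmf_def)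

lemma pmf_column_Ms: "z \<le> r \<Longrightarrow> pmf (column_pmf (Ms q r) z) x = Ms q r x z"
  using pmf_embed_stochastic_vector[OF stochastic_Ms] by (simp add: column_pmf_def)

definition emission :: "nat \<Rightarrow> nat \<Rightarrow> nat pmf" where
  "emission x x' = (if x' = 0 then pin p00 p10 x else return_pmf 0)"

lemma pmf_emission: "pmf (emission x x') y = pY p00 p10 x x' y"
  by (simp add: emission_def pY_def pin_def pmf_return)

definition step :: "nat \<Rightarrow> (nat \<times> nat \<times> nat) pmf" where
  "step x = column_pmf (Ml q r) x \<bind>
     (\<lambda>x'. map_pmf (Pair x') (column_pmf (Ms q r) x' \<bind> (\<lambda>z. map_pmf (Pair z) (emission z x'))))"

abbreviation trajectory :: "nat \<Rightarrow> nat \<Rightarrow> (nat \<times> nat \<times> nat) list pmf" where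
  "trajectory \<equiv> path_pmf step (\<lambda>e. fst (snd e))"

lemma pmf_step:
  assumes "x \<le> r"
  shows "pmf (step x) (x', z, y) = Ml q r x' x * Ms q r z x' * pY p00 p10 z x' y"
proof -
  have "pmf (step x) (x', z, y) =
      pmf (column_pmf (Ml q r) x) x' * (pmf (column_pmf (Ms q r) x') z * pmf (emission z x') y)"
    unfolding step_def by (simp add: pmf_bind_map_Pair)
  then show ?thesis
    using assms by (cases "x' \<le> r") (auto simp: pmf_column_Ml pmf_column_Ms pmf_emission Ml_def)
qed

lemma pmf_path_step:
  "x \<le> r \<Longrightarrow> pmf (trajectory n x) L =
     (if length L = n then path_weight q r p00 p10 x L else 0)"
proof (induction n arbitrary: x L)
  case 0
  then show ?case by (cases L) (auto simp: pmf_return)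
next
  case (Suc n)
  show ?case
  proof (cases L)
    case Nil
    then show ?thesis by (auto simp: pmf_eq_0_set_pmf dest: length_path_pmf)
  next
    case (Cons e L')
    obtain x' z y where e: "e = (x', z, y)" by (cases e) auto
    show ?thesis
      unfolding Cons e pmf_path_pmf_Cons
      using Suc by (cases "z \<le> r") (simp_all add: pmf_step Ms_def[of _ _ z])
  qed
qed

lemma htmm_eq_bind_path:
  assumes "stochastic_vector r \<nu>"
  shows "htmm \<nu> q r T p00 p10 =
    embed_pmf \<nu> \<bind> (\<lambda>x. map_pmf (Pair x) (trajectory T x))"
    (is "_ = ?P")
proof -
  have "htmm_density \<nu> q r T p00 p10 (x, L) = pmf ?P (x, L)" for x L
    using assms
    by (cases "x \<le> r")
       (auto simp: pmf_bind_map_Pair pmf_embed_stochastic_vector pmf_path_step htmm_density_def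
             stochastic_vector_def)
  then have "htmm_density \<nu> q r T p00 p10 = pmf ?P" by auto
  then show ?thesis
    unfolding htmm_def by (simp add: type_definition.Rep_inverse[OF td_pmf_embed_pmf])
qed

definition transition :: "nat \<Rightarrow> nat pmf" where
  "transition x = column_pmf (Ml q r) x \<bind> column_pmf (Ms q r)"

lemma map_step_transition: "(\<lambda>x. map_pmf (\<lambda>e. fst (snd e)) (step x)) = transition"
proof
  fix x
  have "map_pmf (\<lambda>e. fst (snd e)) (step x) =
      column_pmf (Ml q r) x \<bind> (\<lambda>x'. column_pmf (Ms q r) x' \<bind> return_pmf)"
    by (simp add: step_def map_bind_pmf map_pmf_comp map_pmf_const)
  then show "map_pmf (\<lambda>e. fst (snd e)) (step x) = transition x"
    by (simp add: transition_def bind_return_pmf')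
qed

lemma set_pmf_column_Ml: "z \<le> r \<Longrightarrow> set_pmf (column_pmf (Ml q r) z) \<subseteq> {..r}"
  unfolding column_pmf_def by (rule set_pmf_embed_stochastic_vector[OF stochastic_Ml])

lemma set_pmf_column_Ms: "z \<le> r \<Longrightarrow> set_pmf (column_pmf (Ms q r) z) \<subseteq> {..r}"
  unfolding column_pmf_def by (rule set_pmf_embed_stochastic_vector[OF stochastic_Ms])

lemma set_pmf_transition: "x \<le> r \<Longrightarrow> set_pmf (transition x) \<subseteq> {..r}"
  using set_pmf_column_Ml set_pmf_column_Ms by (fastforce simp: transition_def)

lemma set_pmf_kernel_pow_transition:
  "x \<le> r \<Longrightarrow> set_pmf (kernel_pow transition n x) \<subseteq> {..r}"
proof (induction n arbitrary: x)
  case (Suc n)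
  then show ?case using set_pmf_transition[OF Suc.prems] by fastforce
qed simp

lemma pmf_transition:
  assumes "x \<le> r" "y \<le> r"
  shows "pmf (transition x) y = Mmat q r $$ (y, x)"
proof -
  have "pmf (transition x) y = (\<Sum>x'\<le>r. pmf (column_pmf (Ms q r) x') y * Ml q r x' x)"
    unfolding transition_def pmf_bind using set_pmf_column_Ml[OF assms(1)]
    by (subst integral_measure_pmf_real[of "{..r}"]) (auto simp: pmf_column_Ml assms)
  also have "\<dots> = Mmat q r $$ (y, x)"
    using assms by (simp add: Mmat_def pmf_column_Ms)
  finally show ?thesis .
qed

lemma pmf_kernel_pow_transition:
  "x \<le> r \<Longrightarrow> y \<le> r \<Longrightarrow> pmf (kernel_pow transition n x) y = (Mmat q r ^\<^sub>m n) $$ (y, x)"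
proof (induction n arbitrary: x)
  case 0
  then show ?case by (simp add: Mmat_def pmf_return)
next
  case (Suc n)
  have M: "Mmat q r \<in> carrier_mat (Suc r) (Suc r)" by (simp add: Mmat_def)
  have "pmf (kernel_pow transition (Suc n) x) y =
      (\<Sum>b\<le>r. (Mmat q r ^\<^sub>m n) $$ (y, b) * Mmat q r $$ (b, x))"
    unfolding kernel_pow.simps pmf_bind using Suc set_pmf_column_Ml set_pmf_column_Ms
    by (subst integral_measure_pmf_real[of "{..r}"])
       (fastforce simp: transition_def pmf_transition[symmetric])+
  also have "\<dots> = (Mmat q r ^\<^sub>m Suc n) $$ (y, x)"
    using Suc.prems M by (simp add: scalar_prod_def atLeast0LessThan lessThan_Suc_atMost)
  finally show ?case .
qed

lemma pmf_transition_zero: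
  assumes "x \<le> r"
  shows "pmf (transition x) 0 = q 0 0 * pmf (column_pmf (Ml q r) x) 0"
proof -
  have "(\<Sum>k\<le>r. Ms q r 0 k * Ml q r k x) = (\<Sum>k\<le>r. if k = 0 then q 0 0 * Ml q r 0 x else 0)"
    by (intro sum.cong) (auto simp: Ms_def)
  then show ?thesis
    using assms by (simp add: pmf_transition Mmat_def pmf_column_Ml)
qed

lemma transition_zero: "transition 0 = column_pmf (Ms q r) 0"
proof -
  have "column_pmf (Ml q r) 0 = return_pmf 0"
    by (rule pmf_eqI) (simp add: pmf_column_Ml pmf_return Ml_def)
  then show ?thesis by (simp add: transition_def bind_return_pmf)
qed

(* Every state X'_t other than 0 emits Y_t = 0, which h ignores. *)
lemma nn_integral_step_emission:
  fixes h G :: "nat \<Rightarrow> ennreal"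
  assumes "h 0 = 0"
  shows "(\<integral>\<^sup>+e. h (snd (snd e)) * G (fst (snd e)) \<partial>step x) =
    ennreal (pmf (column_pmf (Ml q r) x) 0) *
      (\<integral>\<^sup>+z. G z * (\<integral>\<^sup>+y. h y \<partial>pin p00 p10 z) \<partial>column_pmf (Ms q r) 0)"
proof -
  define C where "C = (\<integral>\<^sup>+z. G z * (\<integral>\<^sup>+y. h y \<partial>pin p00 p10 z) \<partial>column_pmf (Ms q r) 0)"
  have inner: "(\<integral>\<^sup>+z. \<integral>\<^sup>+y. G z * h y \<partial>emission z x' \<partial>column_pmf (Ms q r) x') =
      C * indicator {0} x'" for x'
    using assms by (cases "x' = 0") (simp_all add: emission_def C_def nn_integral_cmult)
  have "(\<integral>\<^sup>+e. h (snd (snd e)) * G (fst (snd e)) \<partial>step x) =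
      (\<integral>\<^sup>+x'. \<integral>\<^sup>+z. \<integral>\<^sup>+y. G z * h y \<partial>emission z x' \<partial>column_pmf (Ms q r) x'
        \<partial>column_pmf (Ml q r) x)"
    by (simp add: step_def mult.commute)
  also have "\<dots> = C * emeasure (column_pmf (Ml q r) x) {0}"
    by (simp add: inner nn_integral_cmult_indicator)
  finally show ?thesis
    by (simp add: emeasure_pmf_single C_def mult.commute)
qed

(* The law of Y_t given X'_t = 0. *)
definition inner_law :: "nat pmf" where
  "inner_law = column_pmf (Ms q r) 0 \<bind> pin p00 p10"

(* P(X'_(k+1) = 0 | X_0 = x) *)
definition inner_prob :: "nat \<Rightarrow> nat \<Rightarrow> real" where
  "inner_prob k x = pmf (kernel_pow transition k x \<bind> column_pmf (Ml q r)) 0"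

lemma nn_integral_kernel_pow_inner:
  "(\<integral>\<^sup>+x1. ennreal (pmf (column_pmf (Ml q r) x1) 0) * c \<partial>kernel_pow transition k x) =
    ennreal (inner_prob k x) * c"
  by (simp add: inner_prob_def ennreal_pmf_bind nn_integral_multc)

lemma nn_integral_path_emission:
  fixes h :: "nat \<Rightarrow> ennreal"
  assumes "j < n" "h 0 = 0"
  shows "(\<integral>\<^sup>+L. h (snd (snd (L ! j))) \<partial>trajectory n x) =
    ennreal (inner_prob j x) * (\<integral>\<^sup>+y. h y \<partial>inner_law)"
proof -
  obtain m where m: "n - j = Suc m" using assms by (cases "n - j") auto
  have "(\<integral>\<^sup>+L. h (snd (snd (L ! j))) \<partial>trajectory n x) =
      (\<integral>\<^sup>+L. h (snd (snd (hd (drop j L)))) \<partial>trajectory n x)"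
    using assms
    by (intro nn_integral_cong_AE AE_pmfI) (auto simp: hd_drop_conv_nth dest: length_path_pmf)
  also have "\<dots> = (\<integral>\<^sup>+x1. (\<integral>\<^sup>+L. h (snd (snd (hd L))) \<partial>trajectory (Suc m) x1)
      \<partial>kernel_pow transition j x)"
    using nn_integral_path_pmf_drop[where i = j and n = n and K = step and state = "\<lambda>e. fst (snd e)"
        and F = "\<lambda>L. h (snd (snd (hd L)))" and x = x] assms m
    by (simp only: map_step_transition)
  also have "\<dots> = (\<integral>\<^sup>+x1. (\<integral>\<^sup>+e. h (snd (snd e)) * 1 \<partial>step x1) \<partial>kernel_pow transition j x)"
    by (simp add: measure_pmf.emeasure_space_1)
  also have "\<dots> = (\<integral>\<^sup>+x1. ennreal (pmf (column_pmf (Ml q r) x1) 0) * (\<integral>\<^sup>+y. h y \<partial>inner_law)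
      \<partial>kernel_pow transition j x)"
    using nn_integral_step_emission[where h = h and G = "\<lambda>_. 1"] assms by (simp add: inner_law_def)
  also have "\<dots> = ennreal (inner_prob j x) * (\<integral>\<^sup>+y. h y \<partial>inner_law)"
    by (rule nn_integral_kernel_pow_inner)
  finally show ?thesis .
qed

lemma nn_integral_path_emission_pair:
  fixes g h :: "nat \<Rightarrow> ennreal"
  assumes "i < j" "j < n" "g 0 = 0" "h 0 = 0"
  shows "(\<integral>\<^sup>+L. g (snd (snd (L ! i))) * h (snd (snd (L ! j))) \<partial>trajectory n x) =
    ennreal (inner_prob i x) *
      (\<integral>\<^sup>+z. ennreal (inner_prob (j - i - 1) z) * (\<integral>\<^sup>+y. g y \<partial>pin p00 p10 z)
        \<partial>column_pmf (Ms q r) 0) * (\<integral>\<^sup>+y. h y \<partial>inner_law)"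
proof -
  define k where "k = j - i - 1"
  obtain m where m: "n - i = Suc m" "k < m" using assms by (cases "n - i") (auto simp: k_def)
  let ?F = "\<lambda>L. g (snd (snd (hd L))) * h (snd (snd (tl L ! k)))"
  define C where "C = (\<integral>\<^sup>+y. h y \<partial>inner_law)"
  have "(\<integral>\<^sup>+L. g (snd (snd (L ! i))) * h (snd (snd (L ! j))) \<partial>trajectory n x) =
      (\<integral>\<^sup>+L. ?F (drop i L) \<partial>trajectory n x)"
    using assms
    by (intro nn_integral_cong_AE AE_pmfI)
       (auto simp: hd_drop_conv_nth k_def tl_drop drop_Suc[symmetric] nth_drop dest: length_path_pmf)
  also have "\<dots> = (\<integral>\<^sup>+x1. (\<integral>\<^sup>+e. g (snd (snd e)) *
      (\<integral>\<^sup>+L. h (snd (snd (L ! k))) \<partial>trajectory m (fst (snd e))) \<partial>step x1)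
      \<partial>kernel_pow transition i x)"
    using nn_integral_path_pmf_drop[where i = i and n = n and K = step and state = "\<lambda>e. fst (snd e)"
        and F = ?F and x = x] assms m
    by (simp only: map_step_transition) (simp add: nn_integral_cmult)
  also have "\<dots> = (\<integral>\<^sup>+x1. (\<integral>\<^sup>+e. g (snd (snd e)) * (ennreal (inner_prob k (fst (snd e))) * C)
      \<partial>step x1) \<partial>kernel_pow transition i x)"
    using m assms by (simp add: nn_integral_path_emission C_def)
  also have "\<dots> = (\<integral>\<^sup>+x1. ennreal (pmf (column_pmf (Ml q r) x1) 0) *
      (\<integral>\<^sup>+z. (ennreal (inner_prob k z) * C) * (\<integral>\<^sup>+y. g y \<partial>pin p00 p10 z) \<partial>column_pmf (Ms q r) 0)
      \<partial>kernel_pow transition i x)"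
    by (simp only: nn_integral_step_emission[where h = g and G = "\<lambda>z. ennreal (inner_prob k z) * C", OF assms(3)])
  also have "\<dots> = ennreal (inner_prob i x) *
      ((\<integral>\<^sup>+z. ennreal (inner_prob k z) * (\<integral>\<^sup>+y. g y \<partial>pin p00 p10 z) \<partial>column_pmf (Ms q r) 0) * C)"
    by (simp add: nn_integral_kernel_pow_inner nn_integral_cmult mult_ac)
  finally show ?thesis by (simp add: k_def C_def mult.assoc)
qed

lemma inner_prob_Suc_zero: "inner_prob (Suc k) 0 = (\<Sum>z\<le>r. q z 0 * inner_prob k z)"
proof -
  have "inner_prob (Suc k) 0 = (\<integral>z. inner_prob k z \<partial>column_pmf (Ms q r) 0)"
    by (simp add: inner_prob_def transition_zero bind_assoc_pmf pmf_bind)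
  also have "\<dots> = (\<Sum>z\<le>r. q z 0 * inner_prob k z)"
    unfolding column_pmf_def
    by (subst integral_embed_stochastic_vector[OF stochastic_Ms]) (simp_all add: Ms_def)
  finally show ?thesis .
qed

(* M^s moves only out of state 0, so X_(k+1) = 0 requires X'_(k+1) = 0. *)
lemma Mmat_pow_Suc_zero: "(Mmat q r ^\<^sub>m Suc k) $$ (0, 0) = q 0 0 * inner_prob k 0"
proof -
  have "(Mmat q r ^\<^sub>m Suc k) $$ (0, 0) = pmf (kernel_pow transition (Suc k) 0) 0"
    by (simp only: pmf_kernel_pow_transition le0)
  also have "\<dots> = (\<integral>y. pmf (transition y) 0 \<partial>kernel_pow transition k 0)"
    by (simp only: kernel_pow_Suc_right pmf_bind)
  also have "\<dots> = (\<integral>y. q 0 0 * pmf (column_pmf (Ml q r) y) 0 \<partial>kernel_pow transition k 0)"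
    using set_pmf_kernel_pow_transition[of 0 k]
    by (intro integral_cong_AE AE_pmfI) (auto simp: pmf_transition_zero)
  also have "\<dots> = q 0 0 * inner_prob k 0"
    by (simp add: inner_prob_def pmf_bind)
  finally show ?thesis .
qed

lemma nn_integral_column_Ms_zero:
  "(\<integral>\<^sup>+z. f z \<partial>column_pmf (Ms q r) 0) = (\<Sum>z\<le>r. ennreal (q z 0) * f z)"
  unfolding column_pmf_def
  by (subst nn_integral_embed_stochastic_vector[OF stochastic_Ms]) (simp_all add: Ms_def)

lemma theta1_eq: "theta1 q r p00 p10 = q 0 0 * pmean p00 + (1 - q 0 0) * pmean p10"
proof -
  have "(\<Sum>x\<le>r. q x 0) = 1" using q_stoch r_pos by auto
  then have rest: "(\<Sum>x\<in>{..r} - {0}. q x 0) = 1 - q 0 0"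
    by (simp add: sum.remove[of "{..r}" 0])
  have "theta1 q r p00 p10 = q 0 0 * pmean p00 + (\<Sum>x\<in>{..r} - {0}. q x 0 * pmean p10)"
    unfolding theta1_def by (subst sum.remove[of _ 0]) (auto simp: pin_def intro!: sum.cong)
  then show ?thesis
    by (simp add: rest sum_distrib_right[symmetric])
qed

lemma theta1_nonneg: "0 \<le> theta1 q r p00 p10"
  using q_range r_pos by (auto simp: theta1_def pmean_def intro!: sum_nonneg)

lemma inner_prob_nonneg: "0 \<le> inner_prob k x"
  by (simp add: inner_prob_def)

lemma sum_inner_prob_pmean:
  "(\<Sum>z\<le>r. q z 0 * inner_prob k z * pmean (pin p00 p10 z)) =
    pmean p10 * inner_prob (Suc k) 0 + q 0 0 * (pmean p00 - pmean p10) * inner_prob k 0"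
proof -
  have "(\<Sum>z\<le>r. q z 0 * inner_prob k z * pmean (pin p00 p10 z)) =
      (\<Sum>z\<le>r. pmean p10 * (q z 0 * inner_prob k z) +
        (if z = 0 then q 0 0 * (pmean p00 - pmean p10) * inner_prob k 0 else 0))"
    by (intro sum.cong) (auto simp: pin_def algebra_simps)
  then show ?thesis
    by (simp add: sum.distrib sum_distrib_left[symmetric] inner_prob_Suc_zero)
qed

lemma nn_integral_inner_law:
  assumes "\<And>z. integrable (pin p00 p10 z) f" "\<And>y. 0 \<le> f y"
  shows "(\<integral>\<^sup>+y. ennreal (f y) \<partial>inner_law) =
    ennreal (\<Sum>z\<le>r. q z 0 * measure_pmf.expectation (pin p00 p10 z) f)"
proof -
  have "(\<integral>\<^sup>+y. ennreal (f y) \<partial>inner_law) =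
      (\<Sum>z\<le>r. ennreal (q z 0) * ennreal (measure_pmf.expectation (pin p00 p10 z) f))"
    using assms by (simp add: inner_law_def nn_integral_column_Ms_zero nn_integral_eq_integral)
  also have "\<dots> = ennreal (\<Sum>z\<le>r. q z 0 * measure_pmf.expectation (pin p00 p10 z) f)"
    using q_range r_pos assms(2)
    by (subst sum_ennreal[symmetric]) (auto simp: ennreal_mult intro!: sum.cong)
  finally show ?thesis .
qed

end

lemma lag_coefficients:
  fixes q0 m0 m1 :: real
  defines "\<theta> \<equiv> q0 * m0 + (1 - q0) * m1"
  assumes "0 < \<theta>" "q0 < 1"
  shows "(1 - q0 * m0 / \<theta>) / (1 - q0) = m1 / \<theta>"
    and "q0 * m0 / \<theta> - q0 * (1 - q0 * m0 / \<theta>) / (1 - q0) = q0 * (m0 - m1) / \<theta>"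
proof -
  have "1 - q0 * m0 / \<theta> = (1 - q0) * m1 / \<theta>"
    using assms(2) by (simp add: \<theta>_def field_simps)
  then show m1: "(1 - q0 * m0 / \<theta>) / (1 - q0) = m1 / \<theta>"
    using assms(3) by simp
  have "q0 * (1 - q0 * m0 / \<theta>) / (1 - q0) = q0 * m1 / \<theta>"
    using m1 by (metis times_divide_eq_left times_divide_eq_right)
  then show "q0 * m0 / \<theta> - q0 * (1 - q0 * m0 / \<theta>) / (1 - q0) = q0 * (m0 - m1) / \<theta>"
    by (simp add: diff_divide_distrib right_diff_distrib)
qed

lemma cov_eq_expectation_mult:
  fixes P :: "'a pmf"
  assumes "integrable P X" "integrable P Z" "integrable P (\<lambda>w. X w * Z w)"
  shows "cov P X Z = measure_pmf.expectation P (\<lambda>w. X w * Z w) -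
    measure_pmf.expectation P X * measure_pmf.expectation P Z"
proof -
  define a b where "a = measure_pmf.expectation P X" and "b = measure_pmf.expectation P Z"
  have "cov P X Z = measure_pmf.expectation P (\<lambda>w. (X w * Z w - b * X w) - (a * Z w - a * b))"
    unfolding cov_def a_def[symmetric] b_def[symmetric]
    by (rule Bochner_Integration.integral_cong) (auto simp: algebra_simps)
  also have "\<dots> = measure_pmf.expectation P (\<lambda>w. X w * Z w) - b * a - (a * b - a * b)"
    using assms by (simp add: a_def b_def)
  finally show ?thesis by (simp add: a_def b_def)
qed

lemma mgf_finite_near_0_imp_square_integrable:
  assumes "mgf_finite_near_0 p"
  shows "integrable p (\<lambda>y. real y ^ 2)"
proof -
  obtain e where e: "0 < e" and mgf: "\<And>s. \<bar>s\<bar> < e \<Longrightarrow> integrable p (\<lambda>y. exp (s * real y))"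
    using assms unfolding mgf_finite_near_0_def by blast
  define s where "s = e / 2"
  have s: "0 < s" "\<bar>s\<bar> < e" using e by (auto simp: s_def)
  have "real y ^ 2 \<le> 2 / s ^ 2 * exp (s * real y)" for y
  proof -
    have "0 \<le> s * real y" using s by simp
    then have "s ^ 2 * real y ^ 2 \<le> 2 * exp (s * real y)"
      using exp_lower_Taylor_quadratic[of "s * real y"] by (simp add: power_mult_distrib)
    then show ?thesis
      using s by (simp add: pos_le_divide_eq mult.commute)
  qed
  then show ?thesis
    by (intro Bochner_Integration.integrable_bound[OF integrable_mult_right[OF mgf[OF s(2)],
          of "2 / s ^ 2"]] AE_pmfI) auto
qed

locale htmm_process = htmm_model +
  fixes \<nu> :: "nat \<Rightarrow> real" and T :: nat
  assumes initial: "stochastic_vector r \<nu>"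
    and square_integrable: "integrable p00 (\<lambda>y. real y ^ 2)" "integrable p10 (\<lambda>y. real y ^ 2)"
begin

abbreviation P :: "outcome pmf" where
  "P \<equiv> htmm \<nu> q r T p00 p10"

(* P(X'_t = 0) *)
definition inner_prob_at :: "nat \<Rightarrow> real" where
  "inner_prob_at t = (\<Sum>x\<le>r. \<nu> x * inner_prob (t - 1) x)"

lemma inner_prob_at_nonneg: "0 \<le> inner_prob_at t"
  using initial by (auto simp: inner_prob_at_def stochastic_vector_def inner_prob_nonneg intro!: sum_nonneg)

lemma nn_integral_initial_inner_prob:
  "(\<integral>\<^sup>+x. ennreal (inner_prob k x) \<partial>embed_pmf \<nu>) = ennreal (\<Sum>x\<le>r. \<nu> x * inner_prob k x)"
proof -
  have "(\<integral>\<^sup>+x. ennreal (inner_prob k x) \<partial>embed_pmf \<nu>) = (\<Sum>x\<le>r. ennreal (\<nu> x * inner_prob k x))"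
    using initial
    by (simp add: nn_integral_embed_stochastic_vector stochastic_vector_def ennreal_mult inner_prob_nonneg)
  also have "\<dots> = ennreal (\<Sum>x\<le>r. \<nu> x * inner_prob k x)"
    using initial by (intro sum_ennreal) (auto simp: stochastic_vector_def inner_prob_nonneg)
  finally show ?thesis .
qed

lemma integrable_pin_square: "integrable (pin p00 p10 z) (\<lambda>y. real y ^ 2)"
  using square_integrable by (simp add: pin_def)

lemma integrable_pin: "integrable (pin p00 p10 z) real"
  by (rule measure_pmf.square_integrable_imp_integrable[OF _ integrable_pin_square]) simp

lemma nn_integral_inner_law_mean:
  "(\<integral>\<^sup>+y. ennreal (real y) \<partial>inner_law) = ennreal (theta1 q r p00 p10)"
  using nn_integral_inner_law[OF integrable_pin] by (simp add: theta1_def pmean_def)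

lemma nn_integral_inner_law_square:
  "(\<integral>\<^sup>+y. ennreal (real y ^ 2) \<partial>inner_law) = ennreal (\<Sum>z\<le>r. q z 0 * psecond (pin p00 p10 z))"
  using nn_integral_inner_law[OF integrable_pin_square] by (simp add: psecond_def)

lemma nn_integral_htmm_emission:
  fixes h :: "nat \<Rightarrow> ennreal"
  assumes "1 \<le> t" "t \<le> T" "h 0 = 0"
  shows "(\<integral>\<^sup>+\<omega>. h (snd (snd (snd \<omega> ! (t - 1)))) \<partial>P) =
    ennreal (inner_prob_at t) * (\<integral>\<^sup>+y. h y \<partial>inner_law)"
proof -
  have "(\<integral>\<^sup>+\<omega>. h (snd (snd (snd \<omega> ! (t - 1)))) \<partial>P) =
      (\<integral>\<^sup>+x. ennreal (inner_prob (t - 1) x) * (\<integral>\<^sup>+y. h y \<partial>inner_law) \<partial>embed_pmf \<nu>)"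
    using assms by (simp add: htmm_eq_bind_path[OF initial] nn_integral_path_emission)
  also have "\<dots> = ennreal (inner_prob_at t) * (\<integral>\<^sup>+y. h y \<partial>inner_law)"
    by (subst nn_integral_multc) (simp_all add: nn_integral_initial_inner_prob inner_prob_at_def)
  finally show ?thesis .
qed

lemma nn_integral_htmm_emission_pair:
  fixes g h :: "nat \<Rightarrow> ennreal"
  assumes "1 \<le> t'" "t' < t" "t \<le> T" "g 0 = 0" "h 0 = 0"
  shows "(\<integral>\<^sup>+\<omega>. g (snd (snd (snd \<omega> ! (t' - 1)))) * h (snd (snd (snd \<omega> ! (t - 1)))) \<partial>P) =
    ennreal (inner_prob_at t') *
      (\<integral>\<^sup>+z. ennreal (inner_prob (t - t' - 1) z) * (\<integral>\<^sup>+y. g y \<partial>pin p00 p10 z)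
        \<partial>column_pmf (Ms q r) 0) * (\<integral>\<^sup>+y. h y \<partial>inner_law)"
proof -
  have "t - 1 - (t' - 1) - 1 = t - t' - 1" using assms by simp
  then have "(\<integral>\<^sup>+\<omega>. g (snd (snd (snd \<omega> ! (t' - 1)))) * h (snd (snd (snd \<omega> ! (t - 1)))) \<partial>P) =
      (\<integral>\<^sup>+x. ennreal (inner_prob (t' - 1) x) *
        ((\<integral>\<^sup>+z. ennreal (inner_prob (t - t' - 1) z) * (\<integral>\<^sup>+y. g y \<partial>pin p00 p10 z)
          \<partial>column_pmf (Ms q r) 0) * (\<integral>\<^sup>+y. h y \<partial>inner_law)) \<partial>embed_pmf \<nu>)"
    using assms
    by (simp add: htmm_eq_bind_path[OF initial] nn_integral_path_emission_pair mult.assoc)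
  also have "\<dots> = ennreal (inner_prob_at t') *
      (\<integral>\<^sup>+z. ennreal (inner_prob (t - t' - 1) z) * (\<integral>\<^sup>+y. g y \<partial>pin p00 p10 z)
        \<partial>column_pmf (Ms q r) 0) * (\<integral>\<^sup>+y. h y \<partial>inner_law)"
    by (subst nn_integral_multc) (simp_all add: nn_integral_initial_inner_prob inner_prob_at_def mult.assoc)
  finally show ?thesis .
qed

lemma expectation_Yobs:
  assumes "1 \<le> t" "t \<le> T"
  shows "integrable P (Yobs t) \<and>
    measure_pmf.expectation P (Yobs t) = inner_prob_at t * theta1 q r p00 p10"
proof -
  have "(\<integral>\<^sup>+\<omega>. ennreal (Yobs t \<omega>) \<partial>P) = ennreal (inner_prob_at t) * ennreal (theta1 q r p00 p10)"
    using nn_integral_htmm_emission[OF assms, where h = "\<lambda>y. ennreal (real y)"]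
    by (simp add: Yobs_def nn_integral_inner_law_mean)
  also have "\<dots> = ennreal (inner_prob_at t * theta1 q r p00 p10)"
    by (simp add: ennreal_mult inner_prob_at_nonneg theta1_nonneg)
  finally show ?thesis
    using inner_prob_at_nonneg theta1_nonneg
    by (subst nn_integral_eq_integrable[symmetric]) (auto simp: Yobs_def)
qed

lemma expectation_Yobs_square:
  assumes "1 \<le> t" "t \<le> T"
  shows "integrable P (\<lambda>\<omega>. Yobs t \<omega> * Yobs t \<omega>) \<and>
    measure_pmf.expectation P (\<lambda>\<omega>. Yobs t \<omega> * Yobs t \<omega>) =
      inner_prob_at t * (\<Sum>z\<le>r. q z 0 * psecond (pin p00 p10 z))"
proof -
  have nonneg: "0 \<le> (\<Sum>z\<le>r. q z 0 * psecond (pin p00 p10 z))"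
    using q_range r_pos by (auto simp: psecond_def intro!: sum_nonneg)
  have "(\<integral>\<^sup>+\<omega>. ennreal (Yobs t \<omega> * Yobs t \<omega>) \<partial>P) =
      ennreal (inner_prob_at t) * ennreal (\<Sum>z\<le>r. q z 0 * psecond (pin p00 p10 z))"
    using nn_integral_htmm_emission[OF assms, where h = "\<lambda>y. ennreal (real y ^ 2)"]
    by (simp add: Yobs_def nn_integral_inner_law_square power2_eq_square[symmetric])
  also have "\<dots> = ennreal (inner_prob_at t * (\<Sum>z\<le>r. q z 0 * psecond (pin p00 p10 z)))"
    by (simp add: ennreal_mult inner_prob_at_nonneg nonneg)
  finally show ?thesis
    using inner_prob_at_nonneg nonneg
    by (subst nn_integral_eq_integrable[symmetric]) (auto simp: Yobs_def)
qed

lemma nn_integral_inner_prob_mean: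
  "(\<integral>\<^sup>+z. ennreal (inner_prob k z) * (\<integral>\<^sup>+y. ennreal (real y) \<partial>pin p00 p10 z)
      \<partial>column_pmf (Ms q r) 0) =
    ennreal (\<Sum>z\<le>r. q z 0 * inner_prob k z * pmean (pin p00 p10 z))"
proof -
  have "(\<integral>\<^sup>+z. ennreal (inner_prob k z) * (\<integral>\<^sup>+y. ennreal (real y) \<partial>pin p00 p10 z)
      \<partial>column_pmf (Ms q r) 0) = (\<Sum>z\<le>r. ennreal (q z 0 * inner_prob k z * pmean (pin p00 p10 z)))"
    using q_range r_pos integrable_pin
    by (auto simp: nn_integral_column_Ms_zero nn_integral_eq_integral pmean_def ennreal_mult
             inner_prob_nonneg mult.assoc intro!: sum.cong)
  also have "\<dots> = ennreal (\<Sum>z\<le>r. q z 0 * inner_prob k z * pmean (pin p00 p10 z))"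
    using q_range r_pos
    by (intro sum_ennreal) (auto simp: inner_prob_nonneg pmean_def)
  finally show ?thesis .
qed

lemma expectation_Yobs_mult:
  assumes "1 \<le> t'" "t' < t" "t \<le> T"
  shows "integrable P (\<lambda>\<omega>. Yobs t \<omega> * Yobs t' \<omega>) \<and>
    measure_pmf.expectation P (\<lambda>\<omega>. Yobs t \<omega> * Yobs t' \<omega>) =
      inner_prob_at t' * theta1 q r p00 p10 *
        (pmean p10 * inner_prob (t - t') 0 + q 0 0 * (pmean p00 - pmean p10) * inner_prob (t - t' - 1) 0)"
proof -
  define D where "D = (\<Sum>z\<le>r. q z 0 * inner_prob (t - t' - 1) z * pmean (pin p00 p10 z))"
  have D_nonneg: "0 \<le> D"
    using q_range r_pos by (auto simp: D_def pmean_def inner_prob_nonneg intro!: sum_nonneg)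
  have "Suc (t - t' - 1) = t - t'" using assms by simp
  then have D_eq: "D = pmean p10 * inner_prob (t - t') 0 +
      q 0 0 * (pmean p00 - pmean p10) * inner_prob (t - t' - 1) 0"
    unfolding D_def by (metis sum_inner_prob_pmean)
  have "(\<integral>\<^sup>+\<omega>. ennreal (Yobs t \<omega> * Yobs t' \<omega>) \<partial>P) =
      ennreal (inner_prob_at t') * ennreal D * ennreal (theta1 q r p00 p10)"
    using nn_integral_htmm_emission_pair[OF assms, where g = "\<lambda>y. ennreal (real y)" and h = "\<lambda>y. ennreal (real y)"]
    by (simp add: Yobs_def D_def ennreal_mult' nn_integral_inner_prob_mean nn_integral_inner_law_mean mult.commute)
  also have "\<dots> = ennreal (inner_prob_at t' * theta1 q r p00 p10 * D)"
    by (simp add: ennreal_mult inner_prob_at_nonneg theta1_nonneg D_nonneg mult_ac)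
  finally show ?thesis
    using inner_prob_at_nonneg theta1_nonneg D_nonneg D_eq
    by (subst nn_integral_eq_integrable[symmetric]) (auto simp: Yobs_def)
qed

lemma cov_Yobs_self:
  assumes "0 < theta1 q r p00 p10" "1 \<le> t" "t \<le> T"
  defines "\<mu> \<equiv> measure_pmf.expectation P (Yobs t)"
  shows "cov P (Yobs t) (Yobs t) =
    (theta1 q r p00 p10 * (theta3 q r p00 p10 + 1) + 1 - \<mu>) * \<mu>"
proof -
  have \<mu>: "\<mu> = inner_prob_at t * theta1 q r p00 p10"
    using expectation_Yobs[OF assms(2,3)] by (simp add: \<mu>_def)
  have "cov P (Yobs t) (Yobs t) =
      inner_prob_at t * (\<Sum>x\<le>r. q x 0 * psecond (pin p00 p10 x)) - (inner_prob_at t * theta1 q r p00 p10)\<^sup>2"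
    using expectation_Yobs[OF assms(2,3)] expectation_Yobs_square[OF assms(2,3)]
    by (simp add: cov_eq_expectation_mult power2_eq_square)
  also have "\<dots> = (theta1 q r p00 p10 * (theta3 q r p00 p10 + 1) + 1 - \<mu>) * \<mu>"
    using assms(1) by (simp add: \<mu> theta3_def inner_var_def field_simps power2_eq_square)
  finally show ?thesis .
qed

lemma cov_Yobs_lag:
  assumes "0 < theta1 q r p00 p10" "0 < q 0 0" "q 0 0 < 1" "1 \<le> t'" "t' < t" "t \<le> T"
  defines "\<theta>\<^sub>2 \<equiv> theta2 q r p00 p10" and "\<mu> \<equiv> \<lambda>t. measure_pmf.expectation P (Yobs t)"
  shows "cov P (Yobs t) (Yobs t') =
    ((\<theta>\<^sub>2 - q 0 0 * (1 - \<theta>\<^sub>2) / (1 - q 0 0)) * mu0 q r p00 p10 (t - t')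
      + (1 - \<theta>\<^sub>2) / (1 - q 0 0) * mu0 q r p00 p10 (t - t' + 1) - \<mu> t) * \<mu> t'"
proof -
  define k where "k = t - t' - 1"
  have k: "t - t' = Suc k" "t - t' + 1 = Suc (Suc k)" using assms by (auto simp: k_def)
  have mu0: "mu0 q r p00 p10 (Suc j) = theta1 q r p00 p10 * inner_prob j 0" for j
    using assms(2) by (simp add: mu0_def Mmat_pow_Suc_zero del: pow_mat.simps)
  have \<mu>': "\<mu> t' = inner_prob_at t' * theta1 q r p00 p10"
    using expectation_Yobs assms by (simp add: \<mu>_def)
  have \<theta>\<^sub>2: "\<theta>\<^sub>2 = q 0 0 * pmean p00 / theta1 q r p00 p10"
    by (simp add: \<theta>\<^sub>2_def theta2_def)
  have "cov P (Yobs t) (Yobs t') = inner_prob_at t' * theta1 q r p00 p10 *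
      (pmean p10 * inner_prob (Suc k) 0 + q 0 0 * (pmean p00 - pmean p10) * inner_prob k 0)
      - \<mu> t * \<mu> t'"
    using expectation_Yobs assms expectation_Yobs_mult[OF assms(4-6)]
    by (simp add: cov_eq_expectation_mult \<mu>_def k)
  also have "\<dots> = ((q 0 0 * (pmean p00 - pmean p10) / theta1 q r p00 p10) * mu0 q r p00 p10 (Suc k)
      + pmean p10 / theta1 q r p00 p10 * mu0 q r p00 p10 (Suc (Suc k)) - \<mu> t) * \<mu> t'"
    using assms(1) by (simp add: mu0 \<mu>' field_simps)
  also have "\<dots> = ((\<theta>\<^sub>2 - q 0 0 * (1 - \<theta>\<^sub>2) / (1 - q 0 0)) * mu0 q r p00 p10 (t - t')
      + (1 - \<theta>\<^sub>2) / (1 - q 0 0) * mu0 q r p00 p10 (t - t' + 1) - \<mu> t) * \<mu> t'"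
    using lag_coefficients[of "q 0 0" "pmean p00" "pmean p10"] assms(1,3)
    by (simp add: \<theta>\<^sub>2 k theta1_eq)
  finally show ?thesis .
qed

end

theorem mainTheorem5:
  fixes r T :: nat and q :: "nat \<Rightarrow> nat \<Rightarrow> real" and \<nu> :: "nat \<Rightarrow> real"
    and p00 p10 :: "nat pmf"
  assumes r: "r \<ge> 1" and T: "T \<ge> 1"
    and q_range: "\<forall>x\<le>r. \<forall>z<r. 0 \<le> q x z \<and> q x z \<le> 1"
    and q_stoch: "\<forall>z<r. (\<Sum>x\<le>r. q x z) = 1"
    and nu_nonneg: "\<forall>x\<le>r. 0 \<le> \<nu> x" and nu_supp: "\<forall>x>r. \<nu> x = 0"
    and nu_sum: "(\<Sum>x\<le>r. \<nu> x) = 1"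
    and q00: "0 < q 0 0" "q 0 0 < 1"
    and th1: "theta1 q r p00 p10 > 0"
    and mgf: "mgf_finite_near_0 p00" "mgf_finite_near_0 p10"
    and diag: "diagonalizable (Mmat q r)"
  defines "P \<equiv> htmm \<nu> q r T p00 p10"
    and "\<mu> \<equiv> \<lambda>t. measure_pmf.expectation (htmm \<nu> q r T p00 p10) (Yobs t)"
    and "\<theta>\<^sub>1 \<equiv> theta1 q r p00 p10" and "\<theta>\<^sub>2 \<equiv> theta2 q r p00 p10"
    and "\<theta>\<^sub>3 \<equiv> theta3 q r p00 p10"
  shows "(\<forall>t\<in>{1..T}. cov P (Yobs t) (Yobs t) = (\<theta>\<^sub>1 * (\<theta>\<^sub>3 + 1) + 1 - \<mu> t) * \<mu> t)
       \<and> (\<forall>t t'. 1 \<le> t' \<and> t' < t \<and> t \<le> T \<longrightarrow>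
            cov P (Yobs t) (Yobs t') =
              ((\<theta>\<^sub>2 - q 0 0 * (1 - \<theta>\<^sub>2) / (1 - q 0 0)) * mu0 q r p00 p10 (t - t')
               + (1 - \<theta>\<^sub>2) / (1 - q 0 0) * mu0 q r p00 p10 (t - t' + 1) - \<mu> t) * \<mu> t')"
proof -
  have "0 \<le> \<nu> x" for x
    using nu_nonneg nu_supp by (cases "x \<le> r") auto
  then have "stochastic_vector r \<nu>"
    using nu_supp nu_sum by (simp add: stochastic_vector_def)
  then interpret htmm_process r q p00 p10 \<nu> T
    using r q_range q_stoch mgf by unfold_locales (auto simp: mgf_finite_near_0_imp_square_integrable)
  show ?thesis
    using cov_Yobs_self[OF th1] cov_Yobs_lag[OF th1 q00]
    unfolding P_def \<mu>_def \<theta>\<^sub>1_def \<theta>\<^sub>2_def \<theta>\<^sub>3_def by auto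
qed

end
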